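(* Consider the algorithm SR-DFF run with input $m$ on a stream consistent with some representation of size $m$ with at most $k$ exceptions. Then SR-DFF creates at most $m+k$ rules during the entire run.
   Context: Setting. $\mathcal{X}$ is a domain, $\mathcal{Y}$ a finite label set, $\Phi$ a set of binary features on $\mathcal{X}$ closed under negation. A representation of size $m$ is a cover $\mathcal{G}=\{G_1,\dots,G_m\}$ of $\mathcal{X}$ by components with labels $\ell(G)$; each $x$ has a fixed component $G(x)\ni x$; $c^*(x)=\ell(G(x))$; for components $G_i,G_j$ with different labels there is $\phi(G_i,G_j)\in\Phi$ true on all of $G_i$ and false on all of $G_j$, with $\phi(G_j,G_i)=\neg\phi(G_i,G_j)$. Protocol: the learner first gets $x_0$ with label $y_0$; then each example $x_t$ arrives, the learner predicts a label with an explanation example previously seen with that label; on a mistake the teacher gives $y_t=c^*(x_t)$ and $\phi(G(x_t),G(\hat x_t))$, $\hat x_t$ the explanation. An exception is an example on which the feedback is inconsistent with the representation/protocol; a stream is consistent with the representation with at most $k$ exceptions if at most $k$ examples are exceptions. SR-DFF (input $m$): receives $(x_0,y_0)$; maintains a list $L$ of rules, each indexed by a representative example $x$, with a conjunction $C[x]$ of features and a label $\texttt{label}[x]$. On $x_t$: if some $C[\hat x]\in L$ is satisfied by $x_t$, predict $\texttt{label}[\hat x]$ with explanation $\hat x$; if incorrect, receive $y_t,\phi$, set $C[\hat x]:=C[\hat x]\wedge\neg\phi$, and delete the rule if $C[\hat x]$ has at least $m$ features. Otherwise predict $y_0$ with explanation $x_0$; if incorrect, receive $y_t,\phi$ and add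 (create) a new rule with empty conjunction $C[x_t]$ and $\texttt{label}[x_t]=y_t$. *)

theory Defs
  imports Main
begin

(* A representation of size m: components G 0 .. G (m-1) (indexed by i < m),
   labels lab i, fixed component assignment gx, separating features phi. *)
definition is_representation ::
  "'x set \<Rightarrow> ('x \<Rightarrow> bool) set \<Rightarrow> 'y set \<Rightarrow> nat \<Rightarrow> (nat \<Rightarrow> 'x set) \<Rightarrow> (nat \<Rightarrow> 'y)
   \<Rightarrow> ('x \<Rightarrow> nat) \<Rightarrow> (nat \<Rightarrow> nat \<Rightarrow> ('x \<Rightarrow> bool)) \<Rightarrow> bool" where
  "is_representation X Phi Y m G lab gx phi \<longleftrightarrow>
     finite Y \<and>
     (\<forall>f\<in>Phi. (\<lambda>x. \<not> f x) \<in> Phi) \<and>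
     (\<forall>i<m. G i \<subseteq> X \<and> lab i \<in> Y) \<and>
     (\<forall>x\<in>X. gx x < m \<and> x \<in> G (gx x)) \<and>
     (\<forall>i<m. \<forall>j<m. lab i \<noteq> lab j \<longrightarrow>
        phi i j \<in> Phi \<and> (\<forall>x\<in>G i. phi i j x) \<and> (\<forall>x\<in>G j. \<not> phi i j x) \<and>
        phi j i = (\<lambda>x. \<not> phi i j x))"

definition cstar :: "(nat \<Rightarrow> 'y) \<Rightarrow> ('x \<Rightarrow> nat) \<Rightarrow> 'x \<Rightarrow> 'y" where
  "cstar lab gx x = lab (gx x)"

(* rule list: representative example \<mapsto> (conjunction as a set of features, label) *)
type_synonym ('x, 'y) rules = "'x \<Rightarrow> (('x \<Rightarrow> bool) set \<times> 'y) option"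

definition rule_sat :: "('x, 'y) rules \<Rightarrow> 'x \<Rightarrow> bool" where
  "rule_sat L x \<longleftrightarrow> (\<exists>e C y. L e = Some (C, y) \<and> (\<forall>f\<in>C. f x))"

(* One step of SR-DFF (input m, initial example x0 with label y0):
   srdff_step m x0 y0 L x e yhat r L' : in state L, on example x, the learner
   predicts yhat with explanation e, receives teacher response r
   (None = no mistake signalled, Some (y, phi) = mistake with correct label y and feature phi),
   and moves to state L'. The choice among satisfied rules is arbitrary. *)
inductive srdff_step ::
  "nat \<Rightarrow> 'x \<Rightarrow> 'y \<Rightarrow> ('x, 'y) rules \<Rightarrow> 'x \<Rightarrow> 'x \<Rightarrow> 'y \<Rightarrow> ('y \<times> ('x \<Rightarrow> bool)) option
   \<Rightarrow> ('x, 'y) rules \<Rightarrow> bool"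
  for m :: nat and x0 :: 'x and y0 :: 'y where
  rule_correct:
    "L e = Some (C, yl) \<Longrightarrow> \<forall>f\<in>C. f x \<Longrightarrow> srdff_step m x0 y0 L x e yl None L"
| rule_mistake:
    "L e = Some (C, yl) \<Longrightarrow> \<forall>f\<in>C. f x \<Longrightarrow>
     srdff_step m x0 y0 L x e yl (Some (y, phi))
       (if m \<le> card (insert (\<lambda>z. \<not> phi z) C) then L(e := None)
        else L(e \<mapsto> (insert (\<lambda>z. \<not> phi z) C, yl)))"
| default_correct:
    "\<not> rule_sat L x \<Longrightarrow> srdff_step m x0 y0 L x x0 y0 None L"
| default_mistake:
    "\<not> rule_sat L x \<Longrightarrow> srdff_step m x0 y0 L x x0 y0 (Some (y, phi)) (L(x \<mapsto> ({}, y)))"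

(* A run on the stream xs (xs 0 = initial example x0, labelled y0); Ls t is the
   rule list before example t (t \<ge> 1); ex t, yhat t = explanation/prediction at t;
   resp t = teacher feedback at t. *)
definition srdff_run ::
  "nat \<Rightarrow> (nat \<Rightarrow> 'x) \<Rightarrow> 'y \<Rightarrow> (nat \<Rightarrow> 'x) \<Rightarrow> (nat \<Rightarrow> 'y)
   \<Rightarrow> (nat \<Rightarrow> ('y \<times> ('x \<Rightarrow> bool)) option) \<Rightarrow> (nat \<Rightarrow> ('x, 'y) rules) \<Rightarrow> bool" where
  "srdff_run m xs y0 ex yhat resp Ls \<longleftrightarrow>
     Ls (Suc 0) = Map.empty \<and>
     (\<forall>t\<ge>1. srdff_step m (xs 0) y0 (Ls t) (xs t) (ex t) (yhat t) (resp t) (Ls (Suc t)))"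

definition exceptions ::
  "(nat \<Rightarrow> 'y) \<Rightarrow> ('x \<Rightarrow> nat) \<Rightarrow> (nat \<Rightarrow> nat \<Rightarrow> ('x \<Rightarrow> bool)) \<Rightarrow> (nat \<Rightarrow> 'x) \<Rightarrow> 'y
   \<Rightarrow> (nat \<Rightarrow> 'x) \<Rightarrow> (nat \<Rightarrow> 'y) \<Rightarrow> (nat \<Rightarrow> ('y \<times> ('x \<Rightarrow> bool)) option) \<Rightarrow> nat set" where
  "exceptions lab gx phi xs y0 ex yhat resp =
     {t. t = 0 \<and> y0 \<noteq> cstar lab gx (xs 0)} \<union>
     {t. t \<ge> 1 \<and> resp t \<noteq>
          (if yhat t = cstar lab gx (xs t) then None
           else Some (cstar lab gx (xs t), phi (gx (xs t)) (gx (ex t))))}"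

definition creation_times ::
  "(nat \<Rightarrow> ('x, 'y) rules) \<Rightarrow> (nat \<Rightarrow> 'x) \<Rightarrow> (nat \<Rightarrow> ('y \<times> ('x \<Rightarrow> bool)) option) \<Rightarrow> nat set" where
  "creation_times Ls xs resp = {t. t \<ge> 1 \<and> \<not> rule_sat (Ls t) (xs t) \<and> resp t \<noteq> None}"

end

theory Submission
  imports Defs
begin

(* Call a rule sound if its label is the true label of the component i of its representative
   and its conjunction uses only features phi i j separating i from differently labelled
   components. A sound rule is satisfied by all of component i, and since there are fewer
   than m separating features, a correctly answered mistake refines it without deleting it.
   Hence the number of components carrying a sound rule never drops on a non-exceptional
   example, grows whenever such an example creates a rule (its component carried no sound
   rule, otherwise that rule would have fired), and drops by at most one on an exception.
   Being at most m, this potential bounds the creations by m plus the exceptions. *)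

lemma card_Int_atLeastAtMost_Suc:
  fixes A :: "nat set"
  shows "card (A \<inter> {1..Suc n}) = card (A \<inter> {1..n}) + of_bool (Suc n \<in> A)"
proof -
  have "A \<inter> {1..Suc n} = (if Suc n \<in> A then insert (Suc n) (A \<inter> {1..n}) else A \<inter> {1..n})"
    by (auto simp: le_Suc_eq)
  then show ?thesis by simp
qed

lemma card_le_by_potential:
  fixes P :: "nat \<Rightarrow> nat" and C E :: "nat set"
  assumes step: "\<And>t. 1 \<le> t \<Longrightarrow> P t + of_bool (t \<in> C) \<le> P (Suc t) + of_bool (t \<in> E)"
  shows "P 1 + card (C \<inter> {1..n}) \<le> P (Suc n) + card (E \<inter> {1..n})"
proof (induction n)
  case 0
  then show ?case by simp
next
  case (Suc n)
  have "P (Suc n) + of_bool (Suc n \<in> C) \<le> P (Suc (Suc n)) + of_bool (Suc n \<in> E)"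
    by (rule step) simp
  with Suc.IH show ?case
    using card_Int_atLeastAtMost_Suc[of C n] card_Int_atLeastAtMost_Suc[of E n] by linarith
qed

lemma finite_card_le_if_card_Int_atMost_le:
  fixes A :: "nat set"
  assumes bound: "\<And>n. card (A \<inter> {..n}) \<le> B"
  shows "finite A \<and> card A \<le> B"
proof (cases "finite A")
  case True
  then obtain n where "A \<subseteq> {..n}" by (auto simp: finite_nat_set_iff_bounded_le)
  then have "A \<inter> {..n} = A" by blast
  with True bound[of n] show ?thesis by simp
next
  case False
  then obtain S where S: "S \<subseteq> A" "finite S" "card S = Suc B"
    using infinite_arbitrarily_large by blast
  then obtain n where "S \<subseteq> {..n}" by (auto simp: finite_nat_set_iff_bounded_le)
  with S have "card S \<le> card (A \<inter> {..n})" by (intro card_mono) auto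
  with S bound[of n] show ?thesis by simp
qed

locale representation =
  fixes X :: "'x set" and Phi :: "('x \<Rightarrow> bool) set" and Y :: "'y set"
    and m :: nat and G :: "nat \<Rightarrow> 'x set" and lab :: "nat \<Rightarrow> 'y"
    and gx :: "'x \<Rightarrow> nat" and phi :: "nat \<Rightarrow> nat \<Rightarrow> ('x \<Rightarrow> bool)"
  assumes is_representation: "is_representation X Phi Y m G lab gx phi"
begin

lemma component_less: "x \<in> X \<Longrightarrow> gx x < m"
  and in_component: "x \<in> X \<Longrightarrow> x \<in> G (gx x)"
  using is_representation unfolding is_representation_def by blast+

lemma separating_feature_true:
    "\<lbrakk>i < m; j < m; lab i \<noteq> lab j; x \<in> G i\<rbrakk> \<Longrightarrow> phi i j x"
  and separating_feature_swap:
    "\<lbrakk>i < m; j < m; lab i \<noteq> lab j\<rbrakk> \<Longrightarrow> phi j i = (\<lambda>x. \<not> phi i j x)"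
  using is_representation unfolding is_representation_def by blast+

definition separating_features :: "nat \<Rightarrow> ('x \<Rightarrow> bool) set" where
  "separating_features i = phi i ` {j. j < m \<and> lab j \<noteq> lab i}"

lemma finite_separating_features: "finite (separating_features i)"
  unfolding separating_features_def by simp

lemma card_separating_features_less:
  assumes "i < m"
  shows "card (separating_features i) < m"
proof -
  have "card (separating_features i) \<le> card {j. j < m \<and> lab j \<noteq> lab i}"
    unfolding separating_features_def by (rule card_image_le) simp
  also have "\<dots> \<le> card ({..<m} - {i})" by (rule card_mono) auto
  also have "\<dots> < m" using assms by simp
  finally show ?thesis .
qed

definition sound_rule :: "('x, 'y) rules \<Rightarrow> 'x \<Rightarrow> bool" where
  "sound_rule L e \<longleftrightarrow> gx e < m \<and>
     (\<exists>C. L e = Some (C, lab (gx e)) \<and> C \<subseteq> separating_features (gx e))"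

definition covered_components :: "('x, 'y) rules \<Rightarrow> nat set" where
  "covered_components L = gx ` Collect (sound_rule L)"

lemma covered_components_subset: "covered_components L \<subseteq> {..<m}"
  unfolding covered_components_def sound_rule_def by auto

lemma finite_covered_components: "finite (covered_components L)"
  using covered_components_subset finite_subset by blast

lemma card_covered_components_le: "card (covered_components L) \<le> m"
  using card_mono[OF _ covered_components_subset] by fastforce

lemma covered_components_empty: "covered_components Map.empty = {}"
  unfolding covered_components_def sound_rule_def by simp

lemma rule_sat_if_sound_rule:
  assumes "sound_rule L e" "x \<in> X" "gx x = gx e"
  shows "rule_sat L x"
proof -
  obtain C where C: "L e = Some (C, lab (gx e))" "C \<subseteq> separating_features (gx e)"
    and "gx e < m"
    using assms(1) unfolding sound_rule_def by blast
  moreover have "x \<in> G (gx e)" using in_component[OF assms(2)] assms(3) by simp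
  ultimately have "f x" if "f \<in> C" for f
  proof -
    from that C(2) obtain j where "f = phi (gx e) j" "j < m" "lab (gx e) \<noteq> lab j"
      unfolding separating_features_def by auto
    with \<open>gx e < m\<close> \<open>x \<in> G (gx e)\<close> show "f x" by (simp add: separating_feature_true)
  qed
  with C(1) show ?thesis unfolding rule_sat_def by blast
qed

lemma uncovered_if_not_rule_sat: "x \<in> X \<Longrightarrow> \<not> rule_sat L x \<Longrightarrow> gx x \<notin> covered_components L"
  unfolding covered_components_def using rule_sat_if_sound_rule by fastforce

lemma covered_components_fun_upd:
  "covered_components L \<subseteq> insert (gx e) (covered_components (L(e := v)))"
  unfolding covered_components_def sound_rule_def by auto

lemma covered_components_fun_upd_mono:
  assumes "sound_rule L e \<Longrightarrow> sound_rule (L(e := v)) e"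
  shows "covered_components L \<subseteq> covered_components (L(e := v))"
proof
  fix i assume "i \<in> covered_components L"
  then obtain e' where "sound_rule L e'" "i = gx e'" unfolding covered_components_def by blast
  moreover from this assms have "sound_rule (L(e := v)) e'"
    by (cases "e' = e") (auto simp: sound_rule_def)
  ultimately show "i \<in> covered_components (L(e := v))" unfolding covered_components_def by blast
qed

lemma sound_rule_refine:
  assumes "x \<in> X" "sound_rule L e" "L e = Some (C, yl)" "lab (gx x) \<noteq> yl"
  defines "C' \<equiv> insert (\<lambda>z. \<not> phi (gx x) (gx e) z) C"
  shows "card C' < m" and "sound_rule (L(e \<mapsto> (C', yl))) e"
proof -
  have e: "gx e < m" "yl = lab (gx e)" and C: "C \<subseteq> separating_features (gx e)"
    using assms(2,3) unfolding sound_rule_def by auto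
  have x: "gx x < m" "lab (gx x) \<noteq> lab (gx e)" using component_less assms(1,4) e by auto
  then have "(\<lambda>z. \<not> phi (gx x) (gx e) z) = phi (gx e) (gx x)"
    using separating_feature_swap[OF x(1) e(1) x(2)] by simp
  with x C have C': "C' \<subseteq> separating_features (gx e)"
    unfolding C'_def separating_features_def by auto
  have "card C' \<le> card (separating_features (gx e))"
    by (rule card_mono[OF finite_separating_features C'])
  with card_separating_features_less[OF e(1)] show "card C' < m" by linarith
  from C' e show "sound_rule (L(e \<mapsto> (C', yl))) e" unfolding sound_rule_def by simp
qed

definition prescribed_feedback :: "'x \<Rightarrow> 'x \<Rightarrow> 'y \<Rightarrow> ('y \<times> ('x \<Rightarrow> bool)) option" where
  "prescribed_feedback x e yh =
     (if yh = cstar lab gx x then None else Some (cstar lab gx x, phi (gx x) (gx e)))"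

lemma mem_exceptions_iff:
  "1 \<le> t \<Longrightarrow> t \<in> exceptions lab gx phi xs y0 ex yhat resp
     \<longleftrightarrow> resp t \<noteq> prescribed_feedback (xs t) (ex t) (yhat t)"
  unfolding exceptions_def prescribed_feedback_def by auto

lemma srdff_step_covered_components:
  assumes x: "x \<in> X" and step: "srdff_step m x0 y0 L x e yh r L'"
  shows "card (covered_components L) + of_bool (\<not> rule_sat L x \<and> r \<noteq> None)
    \<le> card (covered_components L') + of_bool (r \<noteq> prescribed_feedback x e yh)"
  using step
proof cases
  case (rule_mistake C y psi)
  define C' where "C' = insert (\<lambda>z. \<not> psi z) C"
  have sat: "rule_sat L x" using rule_mistake unfolding rule_sat_def by blast
  have L': "L' = L(e := (if m \<le> card C' then None else Some (C', yh)))"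
    using rule_mistake unfolding C'_def by simp
  show ?thesis
  proof (cases "r = prescribed_feedback x e yh")
    case True
    then have "lab (gx x) \<noteq> yh" "psi = phi (gx x) (gx e)"
      using rule_mistake unfolding prescribed_feedback_def cstar_def by (auto split: if_splits)
    then have "covered_components L \<subseteq> covered_components L'"
      unfolding L' C'_def using sound_rule_refine[of x L e C yh] x \<open>L e = Some (C, yh)\<close>
      by (intro covered_components_fun_upd_mono) (simp add: not_le)
    then show ?thesis using sat True by (simp add: card_mono finite_covered_components)
  next
    case False
    have "card (covered_components L) \<le> card (insert (gx e) (covered_components L'))"
      unfolding L' by (intro card_mono covered_components_fun_upd) (simp add: finite_covered_components)
    also have "\<dots> \<le> card (covered_components L') + 1" by (rule card_insert_le_m1) simp_all
    finally show ?thesis using sat False by simp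
  qed
next
  case (default_mistake y psi)
  have unsat: "\<not> rule_sat L x" using default_mistake by simp
  have uncovered: "gx x \<notin> covered_components L" by (rule uncovered_if_not_rule_sat[OF x unsat])
  have L': "L' = L(x := Some ({}, y))" using default_mistake by simp
  have "\<not> sound_rule L x" using uncovered unfolding covered_components_def by blast
  then have sub: "covered_components L \<subseteq> covered_components L'"
    unfolding L' by (intro covered_components_fun_upd_mono) simp
  show ?thesis
  proof (cases "r = prescribed_feedback x e yh")
    case True
    then have "y = lab (gx x)"
      using default_mistake unfolding prescribed_feedback_def cstar_def by (auto split: if_splits)
    then have "sound_rule L' x"
      using default_mistake component_less[OF x] unfolding sound_rule_def by simp
    then have "gx x \<in> covered_components L'" unfolding covered_components_def by blast
    with sub uncovered have "covered_components L \<subset> covered_components L'" by blast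
    then have "card (covered_components L) < card (covered_components L')"
      by (rule psubset_card_mono[OF finite_covered_components])
    then show ?thesis using default_mistake True by simp
  next
    case False
    then show ?thesis using sub default_mistake by (simp add: card_mono finite_covered_components)
  qed
qed (simp_all add: rule_sat_def)

end

theorem lemma4:
  fixes X :: "'x set" and Phi :: "('x \<Rightarrow> bool) set" and Y :: "'y set"
    and m k :: nat and G :: "nat \<Rightarrow> 'x set" and lab :: "nat \<Rightarrow> 'y"
    and gx :: "'x \<Rightarrow> nat" and phi :: "nat \<Rightarrow> nat \<Rightarrow> ('x \<Rightarrow> bool)"
    and xs :: "nat \<Rightarrow> 'x" and y0 :: 'y and ex :: "nat \<Rightarrow> 'x" and yhat :: "nat \<Rightarrow> 'y"
    and resp :: "nat \<Rightarrow> ('y \<times> ('x \<Rightarrow> bool)) option" and Ls :: "nat \<Rightarrow> ('x, 'y) rules"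
  assumes "is_representation X Phi Y m G lab gx phi"
    and "\<forall>t. xs t \<in> X"
    and "srdff_run m xs y0 ex yhat resp Ls"
    and "finite (exceptions lab gx phi xs y0 ex yhat resp)"
    and "card (exceptions lab gx phi xs y0 ex yhat resp) \<le> k"
  shows "finite (creation_times Ls xs resp) \<and> card (creation_times Ls xs resp) \<le> m + k"
proof -
  interpret representation X Phi Y m G lab gx phi by standard (rule assms(1))
  let ?E = "exceptions lab gx phi xs y0 ex yhat resp"
  let ?CT = "creation_times Ls xs resp"
  let ?P = "\<lambda>t. card (covered_components (Ls t))"
  have init: "?P 1 = 0" using assms(3) by (simp add: srdff_run_def covered_components_empty)
  have "?P t + of_bool (t \<in> ?CT) \<le> ?P (Suc t) + of_bool (t \<in> ?E)" if "1 \<le> t" for t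
  proof -
    have "srdff_step m (xs 0) y0 (Ls t) (xs t) (ex t) (yhat t) (resp t) (Ls (Suc t))"
      using assms(3) that by (simp add: srdff_run_def)
    from srdff_step_covered_components[OF _ this] assms(2) that show ?thesis
      by (simp add: creation_times_def mem_exceptions_iff)
  qed
  then have potential: "card (?CT \<inter> {1..n}) \<le> ?P (Suc n) + card (?E \<inter> {1..n})" for n
    using card_le_by_potential[of ?P ?CT ?E] init by simp
  have "card (?CT \<inter> {..n}) \<le> m + k" for n
  proof -
    have "?CT \<inter> {..n} = ?CT \<inter> {1..n}" by (auto simp: creation_times_def)
    moreover have "card (?E \<inter> {1..n}) \<le> k"
      using card_mono[OF assms(4), of "?E \<inter> {1..n}"] assms(5) by auto
    ultimately show ?thesis using potential[of n] card_covered_components_le[of "Ls (Suc n)"] by simp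
  qed
  then show ?thesis by (rule finite_card_le_if_card_Int_atMost_le)
qed

end
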